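(* Let $\mathcal F^{\mathfrak t}$, $\mathfrak t\in\Delta$, be the translational family generated by a dominated lower triangular $C^1$ IFS $\mathcal F$ on a compact set $S\subset\mathbb R^d$. Then there exists a function $h:(0,r_0)\to(0,\infty)$ with $\lim_{\delta\to0}h(\delta)=0$ such that for every $\delta\in(0,r_0)$ there is $C(\delta)\ge1$ with $$\big\|D_yf^{\mathfrak s}_{\omega}\cdot\big(D^*_{z_1,\dots,z_d}f^{\mathfrak t}_{\omega}\big)^{-1}\big\|\le C(\delta)e^{nh(\delta)}$$ for every $n\in\mathbb N$, $\omega\in\Sigma_n$, $y,z_1,\dots,z_d\in S$ and $\mathfrak s,\mathfrak t\in\Delta$ with $|\mathfrak s-\mathfrak t|<\delta$.
   Context: Dominated lower triangular $C^1$ IFS on a compact $S\subset\mathbb R^d$ with nonempty interior: $\ell\ge2$ maps $f_i$ with (i) $f_i(S)\subset\mathrm{int}(S)$; (ii) a bounded open connected $U\supset S$ such that each $f_i$ extends to a contracting $C^1$ diffeomorphism $f_i:U\to f_i(U)$ with $\overline{f_i(U)}\subset U$; (iii) for each $z\in S$, $D_zf_i$ is lower triangular with $|(D_zf_i)_{11}|\ge\dots\ge|(D_zf_i)_{dd}|$. Translational family: $r_0>0$ is chosen so that $f_i+\mathbf t_i$ maps $S$ into $\mathrm{int}(S)$ for all $i$ whenever $|\mathfrak t|<r_0$, where $\mathfrak t=(\mathbf t_1,\dots,\mathbf t_\ell)\in\mathbb R^{\ell d}$; $\Delta=\{\mathfrak t:|\mathfrak t|<r_0\}$, $f^{\mathfrak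 t}_i=f_i+\mathbf t_i$, and for $\omega=\omega_1\cdots\omega_n\in\Sigma_n=\{1,\dots,\ell\}^n$, $f^{\mathfrak t}_\omega=f^{\mathfrak t}_{\omega_1}\circ\cdots\circ f^{\mathfrak t}_{\omega_n}$. For a $C^1$ map $g=(g_1,\dots,g_d):S\to\mathbb R^d$ and $z_1,\dots,z_d\in S$, $D^*_{z_1,\dots,z_d}g$ is the $d\times d$ matrix whose $i$-th row is $\nabla g_i(z_i)^T$, i.e. $(D^*_{z_1,\dots,z_d}g)_{ij}=(D_{z_i}g)_{ij}$. $\|\cdot\|$ is the operator norm. *)

theory Defs
  imports "HOL-Analysis.Analysis"
begin

abbreviation Dmat :: "(real^'d \<Rightarrow> real^'d) \<Rightarrow> real^'d \<Rightarrow> real^'d^'d" where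
  "Dmat g z \<equiv> jacobian g (at z)"

definition C1_on :: "(real^'d) set \<Rightarrow> (real^'d \<Rightarrow> real^'d) \<Rightarrow> bool" where
  "C1_on U g \<longleftrightarrow> (\<forall>x\<in>U. g differentiable (at x)) \<and> continuous_on U (\<lambda>x. Dmat g x)"

definition contracting_C1_diffeo :: "(real^'d) set \<Rightarrow> (real^'d \<Rightarrow> real^'d) \<Rightarrow> bool" where
  "contracting_C1_diffeo U g \<longleftrightarrow>
     C1_on U g \<and> inj_on g U \<and> open (g ` U) \<and>
     (\<exists>ginv. (\<forall>x\<in>U. ginv (g x) = x) \<and> C1_on (g ` U) ginv) \<and>
     (\<exists>c<1. \<forall>x\<in>U. \<forall>y\<in>U. dist (g x) (g y) \<le> c * dist x y)"

definition dominated_lower_triangular :: "real^('d::{finite,linorder})^('d::{finite,linorder}) \<Rightarrow> bool" where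
  "dominated_lower_triangular M \<longleftrightarrow>
     (\<forall>i j::'d::{finite,linorder}. i < j \<longrightarrow> M $ i $ j = 0) \<and>
     (\<forall>i j::'d::{finite,linorder}. i \<le> j \<longrightarrow> \<bar>M $ j $ j\<bar> \<le> \<bar>M $ i $ i\<bar>)"

definition transl :: "('l \<Rightarrow> real^'d \<Rightarrow> real^'d) \<Rightarrow> real^'d^'l \<Rightarrow> 'l \<Rightarrow> real^'d \<Rightarrow> real^'d" where
  "transl f t i = (\<lambda>x. f i x + t $ i)"

definition word_comp :: "('l \<Rightarrow> 'a \<Rightarrow> 'a) \<Rightarrow> 'l list \<Rightarrow> 'a \<Rightarrow> 'a" where
  "word_comp F w = foldr (\<lambda>i g. F i \<circ> g) w id"

definition Dstar :: "(real^'d \<Rightarrow> real^'d) \<Rightarrow> ('d \<Rightarrow> real^'d) \<Rightarrow> real^'d^'d" where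
  "Dstar g z = (\<chi> i j. (Dmat g (z i)) $ i $ j)"

definition mat_opnorm :: "real^'d^'d \<Rightarrow> real" where
  "mat_opnorm M = onorm (\<lambda>x. M *v x)"

end

theory Submission
  imports Defs
begin

text \<open>
  \<open>D f\<^sup>s\<^sub>\<omega>(y)\<close> is a product of dominated lower triangular matrices taken along an orbit. Its
  diagonal entries are exponentials of Birkhoff sums of \<open>ln \<bar>(D f\<^sub>i)\<^sub>j\<^sub>j\<bar>\<close>, and domination bounds
  each entry by a polynomial in \<open>n\<close> times the diagonal entry of its column. Since the maps
  contract, the orbits of \<open>y\<close> under \<open>f\<^sup>s\<close> and of \<open>z\<^sub>k\<close> under \<open>f\<^sup>t\<close> are \<open>2\<delta>/(1-c)\<close>-close after a
  bounded number of steps, so the Birkhoff sums differ by a constant plus \<open>n\<close> times the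
  modulus of continuity of the logarithms at that scale. Solving the triangular system
  \<open>D\<^sup>* f\<^sup>t\<^sub>\<omega> u = v\<close> row by row then bounds the operator norm by a polynomial in \<open>n\<close> times
  that exponential, and the polynomial is absorbed into \<open>e\<^sup>n\<^sup>\<delta>\<close>.
\<close>

lemma power_le_exp_mult:
  fixes x \<delta> :: real
  assumes "x \<ge> 0" "\<delta> > 0"
  shows "(x + 1) ^ p \<le> (real p / \<delta> + 1) ^ p * exp (\<delta> * (x + 1))"
proof (cases "p = 0")
  case False
  define y where "y = \<delta> * (x + 1) / real p"
  have "x + 1 = real p / \<delta> * y" using False assms by (simp add: y_def field_simps)
  also have "\<dots> \<le> (real p / \<delta> + 1) * exp y"
    using assms by (intro mult_mono order_trans[OF _ exp_ge_add_one_self]) (auto simp: y_def)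
  finally have "(x + 1) ^ p \<le> ((real p / \<delta> + 1) * exp y) ^ p"
    using assms by (intro power_mono) auto
  also have "\<dots> = (real p / \<delta> + 1) ^ p * exp (\<delta> * (x + 1))"
    using False by (simp add: power_mult_distrib exp_of_nat_mult[symmetric] y_def)
  finally show ?thesis .
qed (use assms in simp)

lemma power_poly_exp_le:
  fixes x m \<delta> C :: real
  assumes "x \<ge> 0" "\<delta> > 0" "C \<ge> 0"
  shows "(C * (x + 1) ^ d * exp (x * m)) ^ (d + 2)
           \<le> C ^ (d + 2) * (real (d * (d + 2)) / \<delta> + 1) ^ (d * (d + 2)) * exp \<delta>
             * exp (x * (real (d + 2) * m + \<delta>))"
proof -
  let ?p = "d * (d + 2)"
  have "(C * (x + 1) ^ d * exp (x * m)) ^ (d + 2) = C ^ (d + 2) * (x + 1) ^ ?p * exp (real (d + 2) * (x * m))"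
    by (simp only: power_mult_distrib power_mult exp_of_nat_mult)
  also have "\<dots> \<le> C ^ (d + 2) * ((real ?p / \<delta> + 1) ^ ?p * exp (\<delta> * (x + 1))) * exp (real (d + 2) * (x * m))"
    using power_le_exp_mult[of x \<delta> ?p] assms by (intro mult_right_mono mult_left_mono) auto
  also have "\<dots> = C ^ (d + 2) * (real ?p / \<delta> + 1) ^ ?p * exp \<delta> * exp (x * (real (d + 2) * m + \<delta>))"
    by (simp add: algebra_simps flip: exp_add)
  finally show ?thesis .
qed

lemma sum_lessThan_le_with_excess:
  fixes g :: "nat \<Rightarrow> real"
  assumes "\<And>k. k < K \<Longrightarrow> g k \<le> a + B" and "\<And>k. K \<le> k \<Longrightarrow> g k \<le> a" and "B \<ge> 0"
  shows "(\<Sum>k<n. g k) \<le> real K * B + real n * a"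
proof -
  have "(\<Sum>k<n. g k) \<le> real (min n K) * B + real n * a"
  proof (induction n)
    case (Suc n)
    then show ?case
      using assms(1)[of n] assms(2)[of n] by (cases "n < K") (auto simp: algebra_simps min_def split: if_splits)
  qed simp
  also have "\<dots> \<le> real K * B + real n * a" using \<open>B \<ge> 0\<close> by (simp add: mult_right_mono)
  finally show ?thesis .
qed

section \<open>Lower triangular matrices\<close>

definition lower_triangular :: "'a::zero^('n::{finite,ord})^('n::{finite,ord}) \<Rightarrow> bool" where
  "lower_triangular M \<longleftrightarrow> (\<forall>i j. i < j \<longrightarrow> M $ i $ j = 0)"

definition rank_below :: "'n::{finite,linorder} \<Rightarrow> nat" where
  "rank_below j = card {k. k < j}"

lemma rank_below_le_card: "rank_below (j::'n::{finite,linorder}) \<le> CARD('n)"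
  unfolding rank_below_def by (rule card_mono) auto

lemma rank_below_strict_mono: "(k::'n::{finite,linorder}) < j \<Longrightarrow> rank_below k < rank_below j"
  unfolding rank_below_def by (rule psubset_card_mono) auto

lemma sum_UNIV_eq_below:
  fixes g :: "'n::{finite,linorder} \<Rightarrow> 'a::comm_monoid_add"
  assumes "\<And>k. a < k \<Longrightarrow> g k = 0"
  shows "sum g UNIV = g a + (\<Sum>k | k < a. g k)"
proof -
  have "sum g UNIV = sum g (insert a {k. k < a})"
    by (rule sum.mono_neutral_right) (auto, meson assms not_less_iff_gr_or_eq)
  then show ?thesis by simp
qed

lemma lower_triangular_mult_nth:
  fixes A :: "'a::comm_semiring_1^('n::{finite,linorder})^('n::{finite,linorder})"
  assumes "lower_triangular A"
  shows "(A ** P) $ a $ b = A $ a $ a * P $ a $ b + (\<Sum>k | k < a. A $ a $ k * P $ k $ b)"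
  unfolding matrix_matrix_mult_def vec_lambda_beta
  by (rule sum_UNIV_eq_below) (use assms in \<open>simp add: lower_triangular_def\<close>)

lemma lower_triangular_mult_vec_nth:
  fixes N :: "'a::comm_semiring_1^('n::{finite,linorder})^('n::{finite,linorder})"
  assumes "lower_triangular N"
  shows "(N *v u) $ j = N $ j $ j * u $ j + (\<Sum>k | k < j. N $ j $ k * u $ k)"
  unfolding matrix_vector_mult_def vec_lambda_beta
  by (rule sum_UNIV_eq_below) (use assms in \<open>simp add: lower_triangular_def\<close>)

lemma lower_triangular_mult:
  fixes A P :: "'a::comm_semiring_1^('n::{finite,linorder})^('n::{finite,linorder})"
  assumes "lower_triangular A" "lower_triangular P"
  shows "lower_triangular (A ** P)" and "(A ** P) $ j $ j = A $ j $ j * P $ j $ j"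
proof -
  have below: "(\<Sum>k | k < a. A $ a $ k * P $ k $ b) = 0" if "b \<ge> a" for a b
    using assms(2) that by (intro sum.neutral) (auto simp: lower_triangular_def)
  show "lower_triangular (A ** P)"
    using assms(2) below by (auto simp: lower_triangular_def lower_triangular_mult_nth[OF assms(1)])
  show "(A ** P) $ j $ j = A $ j $ j * P $ j $ j"
    using below by (simp add: lower_triangular_mult_nth[OF assms(1)])
qed

lemma permutes_decreasing_eq_id:
  fixes p :: "'n::{finite,linorder} \<Rightarrow> 'n"
  assumes "p permutes UNIV" "\<And>i. p i \<le> i"
  shows "p = id"
proof
  fix i :: 'n
  have "inj_on p {k. k \<le> i}"
    using permutes_inj[OF assms(1)] by (rule inj_on_subset) simp
  moreover have "p ` {k. k \<le> i} \<subseteq> {k. k \<le> i}"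
    using assms(2) order_trans by blast
  ultimately have "p ` {k. k \<le> i} = {k. k \<le> i}"
    by (intro endo_inj_surj) auto
  then obtain k where "k \<le> i" "p k = i"
    by (metis (mono_tags, lifting) imageE mem_Collect_eq order_refl)
  with assms(2)[of k] show "p i = id i" by auto
qed

text \<open>The library's \<open>det_lowerdiagonal\<close> needs a well-ordered index type; finiteness suffices.\<close>
lemma det_lower_triangular:
  fixes A :: "'a::comm_ring_1^('n::{finite,linorder})^('n::{finite,linorder})"
  assumes "lower_triangular A"
  shows "det A = (\<Prod>i\<in>UNIV. A $ i $ i)"
proof -
  let ?term = "\<lambda>p. of_int (sign p) * (\<Prod>i\<in>UNIV. A $ i $ p i)"
  have "?term p = 0" if p: "p permutes UNIV" "p \<noteq> id" for p
  proof -
    obtain i where "i < p i"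
      using permutes_decreasing_eq_id[OF p(1)] p(2) by (meson not_le)
    then have "A $ i $ p i = 0"
      using assms by (simp add: lower_triangular_def)
    then have "(\<Prod>i\<in>UNIV. A $ i $ p i) = 0"
      by (intro prod_zero) auto
    then show ?thesis by simp
  qed
  then have "(\<Sum>p\<in>{p. p permutes UNIV} - {id}. ?term p) = 0"
    by (intro sum.neutral) auto
  moreover have "det A = ?term id + (\<Sum>p\<in>{p. p permutes UNIV} - {id}. ?term p)"
    unfolding det_def by (rule sum.remove) (auto simp: permutes_id finite_permutations)
  ultimately show ?thesis by (simp add: sign_id)
qed

lemma lower_triangular_solve_bound:
  fixes N :: "real^('n::{finite,linorder})^('n::{finite,linorder})"
  assumes N: "lower_triangular N"
    and HN: "\<And>j k. \<bar>N $ j $ k\<bar> \<le> H * \<bar>N $ k $ k\<bar>" and H: "H \<ge> 0"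
  shows "\<bar>u $ j\<bar> * \<bar>N $ j $ j\<bar> \<le> (1 + real CARD('n) * H) ^ rank_below j * norm (N *v u)"
proof (induction "rank_below j" arbitrary: j rule: less_induct)
  case less
  define E where "E = 1 + real CARD('n) * H"
  define W where "W = norm (N *v u)"
  define r where "r = rank_below j"
  have E: "E \<ge> 1" "E ^ q \<ge> 1" for q using H by (simp_all add: E_def)
  have W: "W \<ge> 0" by (simp add: W_def)
  have below: "\<bar>N $ j $ k * u $ k\<bar> \<le> H * (E ^ (r - 1) * W)" if "k < j" for k
  proof -
    have rk: "rank_below k < r" using rank_below_strict_mono[OF that] by (simp add: r_def)
    have "\<bar>N $ j $ k * u $ k\<bar> \<le> H * (\<bar>u $ k\<bar> * \<bar>N $ k $ k\<bar>)"
      using mult_left_mono[OF HN[of j k], of "\<bar>u $ k\<bar>"] by (simp add: abs_mult algebra_simps)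
    also have "\<dots> \<le> H * (E ^ rank_below k * W)"
      using less(1)[OF rk[unfolded r_def]] H by (simp add: E_def W_def mult_left_mono)
    also have "\<dots> \<le> H * (E ^ (r - 1) * W)"
      using rk E W H by (intro mult_left_mono mult_right_mono power_increasing) auto
    finally show ?thesis .
  qed
  have "\<bar>u $ j\<bar> * \<bar>N $ j $ j\<bar> = \<bar>(N *v u) $ j - (\<Sum>k | k < j. N $ j $ k * u $ k)\<bar>"
    by (simp add: lower_triangular_mult_vec_nth[OF N] abs_mult)
  also have "\<dots> \<le> \<bar>(N *v u) $ j\<bar> + (\<Sum>k | k < j. \<bar>N $ j $ k * u $ k\<bar>)"
    by (rule order_trans[OF abs_triangle_ineq4 add_left_mono[OF sum_abs]])
  also have "\<dots> \<le> W + (\<Sum>k | k < j. H * (E ^ (r - 1) * W))"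
  proof (rule add_mono)
    show "\<bar>(N *v u) $ j\<bar> \<le> W" unfolding W_def by (rule component_le_norm_cart)
  qed (rule sum_mono, use below in simp)
  also have "\<dots> = W * (1 + real r * H * E ^ (r - 1))"
    by (simp add: r_def rank_below_def algebra_simps)
  also have "\<dots> \<le> W * E ^ r"
  proof (cases r)
    case (Suc q)
    have "real r \<le> real CARD('n)" using rank_below_le_card[of j] by (simp add: r_def)
    then have "real r * H * E ^ q \<le> real CARD('n) * H * E ^ q"
      using H E(2)[of q] by (intro mult_right_mono) auto
    then have "1 + real r * H * E ^ q \<le> E ^ q * E"
      using E(2)[of q] by (simp add: E_def algebra_simps)
    then show ?thesis using Suc W by (simp add: mult_left_mono mult.commute)
  qed simp
  finally show ?case by (simp add: E_def W_def r_def mult.commute)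
qed

lemma lower_triangular_domination_bound:
  fixes M N :: "real^('n::{finite,linorder})^('n::{finite,linorder})"
  assumes N: "lower_triangular N"
    and HN: "\<And>j k. \<bar>N $ j $ k\<bar> \<le> H * \<bar>N $ k $ k\<bar>"
    and HM: "\<And>i j. \<bar>M $ i $ j\<bar> \<le> H * \<bar>N $ j $ j\<bar>"
    and H: "H \<ge> 1"
  shows "norm (M *v u) \<le> (2 * real CARD('n) * H) ^ (CARD('n) + 2) * norm (N *v u)"
proof -
  define d where "d = real CARD('n)"
  define E where "E = 1 + d * H"
  define W where "W = norm (N *v u)"
  have d: "d \<ge> 1" by (simp add: d_def)
  have dH: "1 \<le> d * H" using mult_mono[of 1 d 1 H] d H by simp
  have E: "1 \<le> E" "E \<le> 2 * d * H" using dH by (simp_all add: E_def mult.commute)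
  have W: "W \<ge> 0" by (simp add: W_def)
  have u: "\<bar>u $ j\<bar> * \<bar>N $ j $ j\<bar> \<le> E ^ CARD('n) * W" for j
  proof -
    have "\<bar>u $ j\<bar> * \<bar>N $ j $ j\<bar> \<le> E ^ rank_below j * W"
      using lower_triangular_solve_bound[OF N HN] H by (simp add: E_def W_def d_def)
    also have "\<dots> \<le> E ^ CARD('n) * W"
      using E W rank_below_le_card[of j] by (intro mult_right_mono power_increasing) auto
    finally show ?thesis .
  qed
  have Mu: "\<bar>(M *v u) $ i\<bar> \<le> d * H * E ^ CARD('n) * W" for i
  proof -
    have "\<bar>(M *v u) $ i\<bar> \<le> (\<Sum>j\<in>UNIV. \<bar>M $ i $ j\<bar> * \<bar>u $ j\<bar>)"
      unfolding matrix_vector_mult_def by (simp add: order_trans[OF sum_abs] abs_mult)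
    also have "\<dots> \<le> (\<Sum>j\<in>(UNIV::'n set). H * (E ^ CARD('n) * W))"
    proof (rule sum_mono)
      fix j
      have "\<bar>M $ i $ j\<bar> * \<bar>u $ j\<bar> \<le> H * (\<bar>u $ j\<bar> * \<bar>N $ j $ j\<bar>)"
        using mult_right_mono[OF HM[of i j], of "\<bar>u $ j\<bar>"] by (simp add: algebra_simps)
      also have "\<dots> \<le> H * (E ^ CARD('n) * W)" using u[of j] H by (intro mult_left_mono) auto
      finally show "\<bar>M $ i $ j\<bar> * \<bar>u $ j\<bar> \<le> H * (E ^ CARD('n) * W)" .
    qed
    finally show ?thesis by (simp add: d_def)
  qed
  have "norm (M *v u) \<le> (\<Sum>i\<in>UNIV. \<bar>(M *v u) $ i\<bar>)" by (rule norm_le_l1_cart)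
  also have "\<dots> \<le> d * (d * H * E ^ CARD('n) * W)"
    using sum_mono[of UNIV, OF Mu] by (simp add: d_def)
  also have "\<dots> = d * (d * H) * E ^ CARD('n) * W" by (simp add: algebra_simps)
  also have "\<dots> \<le> (2 * d * H) * (2 * d * H) * (2 * d * H) ^ CARD('n) * W"
    using d H E W by (intro mult_right_mono mult_mono power_mono) (auto simp: algebra_simps)
  finally show ?thesis by (simp add: d_def W_def power_add power2_eq_square mult_ac)
qed

lemma lower_triangular_invertible:
  fixes N :: "real^('n::{finite,linorder})^('n::{finite,linorder})"
  assumes "lower_triangular N" and "\<And>k. N $ k $ k \<noteq> 0"
  shows "invertible N"
  using assms by (simp add: invertible_det_nz det_lower_triangular)

lemma mat_opnorm_mult_matrix_inv_le:
  fixes M N :: "real^'n^'n"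
  assumes "invertible N" and MN: "\<And>u. norm (M *v u) \<le> B * norm (N *v u)"
  shows "mat_opnorm (M ** matrix_inv N) \<le> B"
  unfolding mat_opnorm_def
proof (rule onorm_le)
  have "N ** matrix_inv N = mat 1"
    using assms(1) unfolding matrix_inv_def invertible_def by (rule someI2_ex) blast
  then show "norm ((M ** matrix_inv N) *v v) \<le> B * norm v" for v
    using MN[of "matrix_inv N *v v"] by (simp add: matrix_vector_mul_assoc)
qed

lemma lower_triangular_mult_entry_bound:
  fixes A P :: "real^('n::{finite,linorder})^('n::{finite,linorder})"
  assumes A: "lower_triangular A" and P: "lower_triangular P"
    and dom: "\<And>a b. b \<le> a \<Longrightarrow> \<bar>A $ a $ a\<bar> \<le> \<bar>A $ b $ b\<bar>"
    and off: "\<And>a k b. real CARD('n) * \<bar>A $ a $ k\<bar> \<le> \<beta> * \<bar>A $ b $ b\<bar>"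
    and Pb: "\<And>a b. \<bar>P $ a $ b\<bar> \<le> G ^ rank_below a * e b"
    and G: "G \<ge> 1" and \<beta>: "\<beta> \<ge> 0" and e: "e b \<ge> 0"
  shows "\<bar>(A ** P) $ a $ b\<bar> \<le> (G + \<beta>) ^ rank_below a * (\<bar>A $ b $ b\<bar> * e b)"
proof -
  define r where "r = rank_below a"
  define \<phi> where "\<phi> = \<bar>A $ b $ b\<bar>"
  have diag: "\<bar>A $ a $ a * P $ a $ b\<bar> \<le> G ^ r * (\<phi> * e b)"
  proof (cases "a < b")
    case False
    then have "\<bar>A $ a $ a\<bar> * \<bar>P $ a $ b\<bar> \<le> \<phi> * (G ^ r * e b)"
      using dom[of b a] Pb[of a b] by (intro mult_mono) (auto simp: \<phi>_def r_def)
    then show ?thesis by (simp add: abs_mult algebra_simps)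
  qed (use P G e in \<open>simp add: lower_triangular_def \<phi>_def\<close>)
  have off_sum: "(\<Sum>k | k < a. \<bar>A $ a $ k\<bar>) \<le> \<beta> * \<phi>"
  proof -
    have "real CARD('n) * (\<Sum>k | k < a. \<bar>A $ a $ k\<bar>) \<le> (\<Sum>k | k < a. \<beta> * \<phi>)"
      unfolding sum_distrib_left \<phi>_def by (intro sum_mono off)
    also have "\<dots> \<le> real CARD('n) * (\<beta> * \<phi>)"
      using rank_below_le_card[of a] \<beta>
      by (simp add: rank_below_def[symmetric] mult_right_mono \<phi>_def)
    finally show ?thesis by simp
  qed
  have lower: "\<bar>\<Sum>k | k < a. A $ a $ k * P $ k $ b\<bar> \<le> \<beta> * \<phi> * G ^ (r - 1) * e b"
  proof -
    have "\<bar>P $ k $ b\<bar> \<le> G ^ (r - 1) * e b" if "k < a" for k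
    proof -
      have "rank_below k \<le> r - 1" using rank_below_strict_mono[OF that] by (simp add: r_def)
      then have "G ^ rank_below k \<le> G ^ (r - 1)" using G by (rule power_increasing)
      then show ?thesis using Pb[of k b] e by (meson mult_right_mono order_trans)
    qed
    then have "\<bar>\<Sum>k | k < a. A $ a $ k * P $ k $ b\<bar> \<le> (\<Sum>k | k < a. \<bar>A $ a $ k\<bar> * (G ^ (r - 1) * e b))"
      by (intro order_trans[OF sum_abs] sum_mono) (simp add: abs_mult mult_left_mono)
    also have "\<dots> \<le> \<beta> * \<phi> * (G ^ (r - 1) * e b)"
      using off_sum G e by (simp add: sum_distrib_right[symmetric] mult_right_mono)
    finally show ?thesis by (simp add: mult.assoc)
  qed
  show ?thesis
  proof (cases r)
    case 0
    then have "{k. k < a} = {}" by (simp add: r_def rank_below_def)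
    then show ?thesis using diag 0 by (simp add: lower_triangular_mult_nth[OF A] r_def \<phi>_def)
  next
    case (Suc q)
    have "\<bar>(A ** P) $ a $ b\<bar> \<le> \<bar>A $ a $ a * P $ a $ b\<bar> + \<bar>\<Sum>k | k < a. A $ a $ k * P $ k $ b\<bar>"
      by (simp add: lower_triangular_mult_nth[OF A] abs_triangle_ineq)
    also have "\<dots> \<le> G ^ r * (\<phi> * e b) + \<beta> * \<phi> * G ^ q * e b"
      using diag lower Suc by simp
    also have "\<dots> = G ^ q * (G + \<beta>) * (\<phi> * e b)"
      using Suc by (simp add: algebra_simps)
    also have "\<dots> \<le> (G + \<beta>) ^ q * (G + \<beta>) * (\<phi> * e b)"
      using G \<beta> e by (intro mult_right_mono power_mono) (auto simp: \<phi>_def)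
    finally show ?thesis using Suc by (simp add: r_def \<phi>_def mult_ac)
  qed
qed

section \<open>Modulus of continuity\<close>

definition modulus_of_continuity :: "('a::metric_space \<Rightarrow> 'b::metric_space) \<Rightarrow> 'a set \<Rightarrow> real \<Rightarrow> real" where
  "modulus_of_continuity g S r =
     Sup (insert 0 {dist (g p) (g q) | p q. p \<in> S \<and> q \<in> S \<and> dist p q \<le> r})"

context
  fixes g :: "'a::metric_space \<Rightarrow> 'b::metric_space" and S :: "'a set"
  assumes bounded_image: "bounded (g ` S)"
begin

private lemma bdd_above_dists:
  "bdd_above (insert 0 {dist (g p) (g q) | p q. p \<in> S \<and> q \<in> S \<and> dist p q \<le> r})"
  using diameter_bounded_bound[OF bounded_image] diameter_ge_0[OF bounded_image]
  by (intro bdd_aboveI[of _ "diameter (g ` S)"]) auto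

lemma modulus_of_continuity_nonneg: "0 \<le> modulus_of_continuity g S r"
  unfolding modulus_of_continuity_def by (rule cSup_upper[OF _ bdd_above_dists]) simp

lemma dist_le_modulus_of_continuity:
  "p \<in> S \<Longrightarrow> q \<in> S \<Longrightarrow> dist p q \<le> r \<Longrightarrow> dist (g p) (g q) \<le> modulus_of_continuity g S r"
  unfolding modulus_of_continuity_def by (rule cSup_upper[OF _ bdd_above_dists]) blast

lemma modulus_of_continuity_mono: "r \<le> r' \<Longrightarrow> modulus_of_continuity g S r \<le> modulus_of_continuity g S r'"
  unfolding modulus_of_continuity_def by (rule cSup_subset_mono[OF _ bdd_above_dists]) force+

lemma modulus_of_continuity_le_diameter: "modulus_of_continuity g S r \<le> diameter (g ` S)"
  unfolding modulus_of_continuity_def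
  using diameter_bounded_bound[OF bounded_image] diameter_ge_0[OF bounded_image]
  by (intro cSup_least) auto

lemma modulus_of_continuity_0: "modulus_of_continuity g S 0 = 0"
  unfolding modulus_of_continuity_def by (rule cSup_eq_maximum) auto

lemma isCont_modulus_of_continuity:
  assumes "uniformly_continuous_on S g"
  shows "isCont (modulus_of_continuity g S) 0"
  unfolding isCont_def modulus_of_continuity_0 tendsto_iff
proof (intro allI impI)
  fix \<epsilon> :: real assume "\<epsilon> > 0"
  then obtain \<eta> where "\<eta> > 0"
    and \<eta>: "\<And>p q. p \<in> S \<Longrightarrow> q \<in> S \<Longrightarrow> dist q p < \<eta> \<Longrightarrow> dist (g q) (g p) < \<epsilon> / 2"
    using assms unfolding uniformly_continuous_on_def by (metis half_gt_zero)
  have half: "modulus_of_continuity g S r \<le> \<epsilon> / 2" if "r < \<eta>" for r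
    unfolding modulus_of_continuity_def
  proof (rule cSup_least)
    fix x assume "x \<in> insert 0 {dist (g p) (g q) | p q. p \<in> S \<and> q \<in> S \<and> dist p q \<le> r}"
    then consider "x = 0" | p q where "x = dist (g p) (g q)" "p \<in> S" "q \<in> S" "dist p q \<le> r"
      by blast
    then show "x \<le> \<epsilon> / 2"
    proof cases
      case 2
      then show ?thesis using \<eta>[of q p] that by simp
    qed (use \<open>\<epsilon> > 0\<close> in simp)
  qed simp
  have "dist (modulus_of_continuity g S r) 0 < \<epsilon>" if "dist r 0 < \<eta>" for r
  proof -
    have "r < \<eta>" using that by (simp add: dist_real_def abs_less_iff)
    then show ?thesis using half[of r] \<open>\<epsilon> > 0\<close> modulus_of_continuity_nonneg[of r] by simp
  qed
  then show "\<forall>\<^sub>F r in at 0. dist (modulus_of_continuity g S r) 0 < \<epsilon>"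
    unfolding eventually_at using \<open>\<eta> > 0\<close> by blast
qed

end

section \<open>Derivatives along orbits\<close>

lemma word_comp_Nil [simp]: "word_comp F [] = id"
  by (simp add: word_comp_def)

lemma word_comp_Cons: "word_comp F (i # w) = F i \<circ> word_comp F w"
  by (simp add: word_comp_def)

lemma word_comp_transl_Cons [simp]:
  "word_comp (transl f s) (i # w) y = f i (word_comp (transl f s) w y) + s $ i"
  by (simp add: word_comp_def transl_def)

lemma jacobian_eqI:
  fixes g :: "real^'n \<Rightarrow> real^'m"
  assumes "(g has_derivative (\<lambda>v. P *v v)) (at y)"
  shows "jacobian g (at y) = P"
proof -
  have "g differentiable (at y)" using assms by (rule differentiableI)
  then have "(g has_derivative (\<lambda>v. jacobian g (at y) *v v)) (at y)"
    by (simp add: jacobian_works)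
  then have "(\<lambda>v. jacobian g (at y) *v v) = (\<lambda>v. P *v v)"
    using assms by (rule has_derivative_unique)
  then show ?thesis by (metis matrix_of_matrix_vector_mul)
qed

fun orbit_jacobian ::
  "('l \<Rightarrow> real^'d \<Rightarrow> real^'d) \<Rightarrow> real^'d^'l \<Rightarrow> 'l list \<Rightarrow> real^'d \<Rightarrow> real^'d^'d" where
  "orbit_jacobian f s [] y = mat 1"
| "orbit_jacobian f s (i # w) y = Dmat (f i) (word_comp (transl f s) w y) ** orbit_jacobian f s w y"

fun orbit_log_diag ::
  "('l \<Rightarrow> real^'d \<Rightarrow> real^'d) \<Rightarrow> real^'d^'l \<Rightarrow> 'l list \<Rightarrow> real^'d \<Rightarrow> 'd \<Rightarrow> real" where
  "orbit_log_diag f s [] y j = 0"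
| "orbit_log_diag f s (i # w) y j =
     ln \<bar>Dmat (f i) (word_comp (transl f s) w y) $ j $ j\<bar> + orbit_log_diag f s w y j"

locale dominated_translational_ifs =
  fixes S U :: "(real^('d::{finite,linorder})) set"
    and f :: "'l::finite \<Rightarrow> real^('d::{finite,linorder}) \<Rightarrow> real^('d::{finite,linorder})"
    and r0 :: real
  assumes S_compact: "compact S" and U_open: "open U" and S_U: "S \<subseteq> U"
    and diffeo: "\<And>i. contracting_C1_diffeo U (f i)"
    and dom: "\<And>i z. z \<in> S \<Longrightarrow> dominated_lower_triangular (Dmat (f i) z)"
    and r0_trans: "\<And>t i. norm t < r0 \<Longrightarrow> transl f t i ` S \<subseteq> interior S"
begin

lemma word_comp_in_S: "norm s < r0 \<Longrightarrow> y \<in> S \<Longrightarrow> word_comp (transl f s) w y \<in> S"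
proof (induction w)
  case (Cons i w)
  then show ?case
    using r0_trans[of s i] interior_subset by (fastforce simp: word_comp_Cons)
qed simp

lemma has_derivative_f: "p \<in> U \<Longrightarrow> (f i has_derivative (\<lambda>v. Dmat (f i) p *v v)) (at p)"
  using diffeo[of i] unfolding contracting_C1_diffeo_def C1_on_def by (metis jacobian_works)

lemma continuous_on_Dmat_f: "continuous_on S (Dmat (f i))"
  using diffeo[of i] S_U unfolding contracting_C1_diffeo_def C1_on_def
  by (meson continuous_on_subset)

lemma lower_triangular_Dmat_f: "p \<in> S \<Longrightarrow> lower_triangular (Dmat (f i) p)"
  using dom unfolding dominated_lower_triangular_def lower_triangular_def by blast

lemma Dmat_f_diag_dominated:
  "p \<in> S \<Longrightarrow> a \<le> b \<Longrightarrow> \<bar>Dmat (f i) p $ b $ b\<bar> \<le> \<bar>Dmat (f i) p $ a $ a\<bar>"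
  using dom unfolding dominated_lower_triangular_def by blast

lemma Dmat_f_diag_nonzero:
  assumes p: "p \<in> S"
  shows "Dmat (f i) p $ j $ j \<noteq> 0"
proof -
  have pU: "p \<in> U" using p S_U by auto
  obtain g where g: "\<And>x. x \<in> U \<Longrightarrow> g (f i x) = x" and "C1_on (f i ` U) g"
    using diffeo[of i] unfolding contracting_C1_diffeo_def by blast
  then have "g differentiable (at (f i p))" using pU unfolding C1_on_def by blast
  then have "(g \<circ> f i has_derivative (\<lambda>v. Dmat g (f i p) *v v) \<circ> (\<lambda>v. Dmat (f i) p *v v)) (at p)"
    by (intro diff_chain_at has_derivative_f pU) (simp add: jacobian_works)
  moreover have "(g \<circ> f i has_derivative (\<lambda>v. v)) (at p)"
    by (rule has_derivative_transform_within_open[OF has_derivative_ident U_open pU]) (simp add: g)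
  ultimately have "(\<lambda>v. Dmat g (f i p) *v v) \<circ> (\<lambda>v. Dmat (f i) p *v v) = (\<lambda>v. v)"
    by (rule has_derivative_unique)
  then have "Dmat g (f i p) ** Dmat (f i) p = mat 1"
    by (simp add: matrix_eq matrix_vector_mul_assoc fun_eq_iff)
  then have "det (Dmat (f i) p) \<noteq> 0"
    using invertible_left_inverse invertible_det_nz by blast
  then show ?thesis
    by (simp add: det_lower_triangular[OF lower_triangular_Dmat_f[OF p]])
qed

lemma has_derivative_word_comp:
  assumes "norm s < r0" "y \<in> S"
  shows "(word_comp (transl f s) w has_derivative (\<lambda>v. orbit_jacobian f s w y *v v)) (at y)"
proof (induction w)
  case (Cons i w)
  let ?q = "word_comp (transl f s) w y"
  have "?q \<in> U" using word_comp_in_S[OF assms] S_U by auto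
  then have "(transl f s i has_derivative (\<lambda>v. Dmat (f i) ?q *v v)) (at ?q)"
    unfolding transl_def by (intro has_derivative_add_const has_derivative_f)
  from diff_chain_at[OF Cons this] show ?case
    by (simp add: word_comp_Cons o_def matrix_vector_mul_assoc)
qed (simp add: id_def has_derivative_ident)

lemma Dmat_word_comp:
  "norm s < r0 \<Longrightarrow> y \<in> S \<Longrightarrow> Dmat (word_comp (transl f s) w) y = orbit_jacobian f s w y"
  by (rule jacobian_eqI[OF has_derivative_word_comp])

lemma lower_triangular_orbit_jacobian:
  assumes "norm s < r0" "y \<in> S"
  shows "lower_triangular (orbit_jacobian f s w y)"
proof (induction w)
  case Nil then show ?case by (simp add: lower_triangular_def mat_def)
next
  case (Cons i w)
  then show ?case
    using lower_triangular_Dmat_f[OF word_comp_in_S[OF assms]] by (simp add: lower_triangular_mult)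
qed

lemma abs_orbit_jacobian_diag:
  assumes "norm s < r0" "y \<in> S"
  shows "\<bar>orbit_jacobian f s w y $ j $ j\<bar> = exp (orbit_log_diag f s w y j)"
proof (induction w)
  case (Cons i w)
  let ?A = "Dmat (f i) (word_comp (transl f s) w y)"
  have "\<bar>orbit_jacobian f s (i # w) y $ j $ j\<bar> = \<bar>?A $ j $ j\<bar> * \<bar>orbit_jacobian f s w y $ j $ j\<bar>"
    using lower_triangular_mult(2)[OF lower_triangular_Dmat_f[OF word_comp_in_S[OF assms]]
        lower_triangular_orbit_jacobian[OF assms]]
    by (simp add: abs_mult)
  then show ?case
    using Cons Dmat_f_diag_nonzero[OF word_comp_in_S[OF assms]] by (simp add: exp_add)
qed (simp add: mat_def)


text \<open>All the functions \<open>ln \<bar>(D f\<^sub>i)\<^sub>j\<^sub>j\<bar>\<close> in one vector, so that a single modulus of continuity controls them.\<close>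
definition log_diag :: "real^('d::{finite,linorder}) \<Rightarrow> real^(('d::{finite,linorder}) \<times> 'l)" where
  "log_diag p = (\<chi> ji. ln \<bar>Dmat (f (snd ji)) p $ fst ji $ fst ji\<bar>)"

lemma log_diag_nth: "log_diag p $ (j, i) = ln \<bar>Dmat (f i) p $ j $ j\<bar>"
  by (simp add: log_diag_def)

lemma continuous_on_log_diag: "continuous_on S log_diag"
  unfolding log_diag_def
  by (intro continuous_on_vec_lambda continuous_on_ln continuous_on_rabs continuous_on_component
      continuous_on_Dmat_f) (simp add: Dmat_f_diag_nonzero)

lemma bounded_log_diag: "bounded (log_diag ` S)"
  by (intro compact_imp_bounded compact_continuous_image continuous_on_log_diag S_compact)

lemma Dmat_f_offdiag_dominated:
  obtains \<beta> where "\<beta> \<ge> 1"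
    and "\<And>i p a k b. p \<in> S \<Longrightarrow> real CARD('d) * \<bar>Dmat (f i) p $ a $ k\<bar> \<le> \<beta> * \<bar>Dmat (f i) p $ b $ b\<bar>"
proof -
  obtain L where L: "\<And>p. p \<in> S \<Longrightarrow> norm (log_diag p) \<le> L"
    using bounded_log_diag by (auto simp: bounded_iff)
  have "bounded (\<Union>i. Dmat (f i) ` S)"
    by (rule bounded_UN) (auto intro!: compact_imp_bounded compact_continuous_image continuous_on_Dmat_f S_compact)
  then obtain K where K: "\<And>i p. p \<in> S \<Longrightarrow> norm (Dmat (f i) p) \<le> K"
    by (auto simp: bounded_iff)
  define \<beta> where "\<beta> = max 1 (real CARD('d) * \<bar>K\<bar> * exp L)"
  have "real CARD('d) * \<bar>Dmat (f i) p $ a $ k\<bar> \<le> \<beta> * \<bar>Dmat (f i) p $ b $ b\<bar>" if p: "p \<in> S" for i p a k b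
  proof -
    have "\<bar>Dmat (f i) p $ a $ k\<bar> \<le> \<bar>K\<bar>"
      using component_le_norm_cart[of "Dmat (f i) p $ a" k] Finite_Cartesian_Product.norm_nth_le[of "Dmat (f i) p" a] K[OF p, of i]
      by linarith
    moreover have "- L \<le> ln \<bar>Dmat (f i) p $ b $ b\<bar>"
      using component_le_norm_cart[of "log_diag p" "(b, i)"] L[OF p] by (simp add: log_diag_nth)
    then have "exp (- L) \<le> \<bar>Dmat (f i) p $ b $ b\<bar>"
      using Dmat_f_diag_nonzero[OF p] by (metis exp_le_cancel_iff exp_ln zero_less_abs_iff)
    then have "1 \<le> exp L * \<bar>Dmat (f i) p $ b $ b\<bar>"
      using mult_left_mono[of "exp (- L)" _ "exp L"] by (simp add: exp_minus)
    then have "\<bar>K\<bar> \<le> \<bar>K\<bar> * (exp L * \<bar>Dmat (f i) p $ b $ b\<bar>)"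
      using mult_left_mono[of 1 _ "\<bar>K\<bar>"] by simp
    ultimately have "real CARD('d) * \<bar>Dmat (f i) p $ a $ k\<bar> \<le> real CARD('d) * (\<bar>K\<bar> * (exp L * \<bar>Dmat (f i) p $ b $ b\<bar>))"
      by (intro mult_left_mono) auto
    also have "\<dots> = (real CARD('d) * \<bar>K\<bar> * exp L) * \<bar>Dmat (f i) p $ b $ b\<bar>"
      by (simp add: mult_ac)
    also have "\<dots> \<le> \<beta> * \<bar>Dmat (f i) p $ b $ b\<bar>"
      by (intro mult_right_mono) (auto simp: \<beta>_def)
    finally show ?thesis .
  qed
  then show ?thesis by (intro that[of \<beta>]) (auto simp: \<beta>_def)
qed

lemma orbit_jacobian_entry_bound:
  assumes \<beta>: "\<beta> \<ge> 1"
    and off: "\<And>i p a k b. p \<in> S \<Longrightarrow> real CARD('d) * \<bar>Dmat (f i) p $ a $ k\<bar> \<le> \<beta> * \<bar>Dmat (f i) p $ b $ b\<bar>"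
    and s: "norm s < r0" and y: "y \<in> S"
  shows "\<bar>orbit_jacobian f s w y $ a $ b\<bar>
           \<le> (\<beta> * (real (length w) + 1)) ^ rank_below a * exp (orbit_log_diag f s w y b)"
proof (induction w arbitrary: a b)
  case Nil
  have "\<bar>mat 1 $ a $ b :: real\<bar> \<le> 1" by (simp add: mat_def)
  also have "1 \<le> \<beta> ^ rank_below a" using \<beta> by simp
  finally show ?case by simp
next
  case (Cons i w)
  let ?q = "word_comp (transl f s) w y"
  have q: "?q \<in> S" by (rule word_comp_in_S[OF s y])
  have "\<bar>orbit_jacobian f s (i # w) y $ a $ b\<bar>
      \<le> (\<beta> * (real (length w) + 1) + \<beta>) ^ rank_below a
         * (\<bar>Dmat (f i) ?q $ b $ b\<bar> * exp (orbit_log_diag f s w y b))"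
    unfolding orbit_jacobian.simps
    using \<beta> Cons
    by (intro lower_triangular_mult_entry_bound lower_triangular_Dmat_f[OF q]
        lower_triangular_orbit_jacobian[OF s y] Dmat_f_diag_dominated[OF q] off[OF q])
      (use mult_mono[of 1 \<beta> 1 "real (length w) + 1"] in auto)
  moreover have "\<bar>Dmat (f i) ?q $ b $ b\<bar> * exp (orbit_log_diag f s w y b) = exp (orbit_log_diag f s (i # w) y b)"
    using Dmat_f_diag_nonzero[OF q] by (simp add: exp_add)
  moreover have "\<beta> * (real (length w) + 1) + \<beta> = \<beta> * (real (length (i # w)) + 1)"
    by (simp add: algebra_simps)
  ultimately show ?case by simp
qed


section \<open>Comparing orbits\<close>

lemma common_contraction_factor:
  obtains c where "0 \<le> c" "c < 1" "\<And>i x y. x \<in> U \<Longrightarrow> y \<in> U \<Longrightarrow> dist (f i x) (f i y) \<le> c * dist x y"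
proof -
  obtain c where c: "\<And>i. c i < 1" "\<And>i x y. x \<in> U \<Longrightarrow> y \<in> U \<Longrightarrow> dist (f i x) (f i y) \<le> c i * dist x y"
    using diffeo unfolding contracting_C1_diffeo_def by metis
  define c' where "c' = Max (range (\<lambda>i. max 0 (c i)))"
  have le: "max 0 (c i) \<le> c'" for i unfolding c'_def by (rule Max_ge) auto
  have "c' \<in> range (\<lambda>i. max 0 (c i))" unfolding c'_def by (rule Max_in) auto
  then have "c' < 1" using c(1) by auto
  moreover have "dist (f i x) (f i y) \<le> c' * dist x y" if "x \<in> U" "y \<in> U" for i x y
  proof -
    have "c i * dist x y \<le> c' * dist x y"
      using le[of i] by (intro mult_right_mono) auto
    then show ?thesis using c(2)[OF that, of i] by linarith
  qed
  ultimately show ?thesis using le[of undefined] by (intro that[of c']) auto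
qed

context
  fixes c :: real
  assumes c_nonneg: "0 \<le> c" and c_less_1: "c < 1"
    and contraction: "\<And>i x y. x \<in> U \<Longrightarrow> y \<in> U \<Longrightarrow> dist (f i x) (f i y) \<le> c * dist x y"
begin

lemma dist_word_comp_le:
  assumes "norm s < r0" "norm t < r0" "norm (s - t) \<le> \<delta>" "y \<in> S" "z \<in> S"
  shows "dist (word_comp (transl f s) w y) (word_comp (transl f t) w z)
           \<le> c ^ length w * diameter S + \<delta> / (1 - c)"
proof (induction w)
  case Nil
  have "\<delta> \<ge> 0" using assms(3) norm_ge_zero order_trans by blast
  then have "\<delta> / (1 - c) \<ge> 0" using c_less_1 by simp
  then show ?case
    using diameter_bounded_bound[OF compact_imp_bounded[OF S_compact] assms(4,5)] by simp
next
  case (Cons i w)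
  let ?p = "word_comp (transl f s) w y" and ?q = "word_comp (transl f t) w z"
  have "?p \<in> U" "?q \<in> U" using word_comp_in_S assms S_U by auto
  have "dist (f i ?p + s $ i) (f i ?q + t $ i) = norm ((f i ?p - f i ?q) + (s - t) $ i)"
    by (simp add: dist_norm algebra_simps)
  also have "\<dots> \<le> dist (f i ?p) (f i ?q) + norm ((s - t) $ i)"
    by (simp add: dist_norm norm_triangle_ineq)
  also have "\<dots> \<le> c * dist ?p ?q + \<delta>"
    using contraction[OF \<open>?p \<in> U\<close> \<open>?q \<in> U\<close>, of i] Finite_Cartesian_Product.norm_nth_le[of "s - t" i] assms(3)
    by linarith
  also have "\<dots> \<le> c * (c ^ length w * diameter S + \<delta> / (1 - c)) + \<delta>"
    using Cons c_nonneg by (simp add: mult_left_mono)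
  also have "\<dots> = c ^ length (i # w) * diameter S + \<delta> / (1 - c)"
    using c_less_1 by (simp add: field_simps)
  finally show ?case by simp
qed

lemma orbit_log_diag_diff_le:
  assumes "norm s < r0" "norm t < r0" "norm (s - t) \<le> \<delta>" "y \<in> S" "z \<in> S"
  shows "orbit_log_diag f s w y j - orbit_log_diag f t w z j
           \<le> (\<Sum>k<length w. modulus_of_continuity log_diag S (c ^ k * diameter S + \<delta> / (1 - c)))"
proof (induction w)
  case (Cons i w)
  let ?p = "word_comp (transl f s) w y" and ?q = "word_comp (transl f t) w z"
  have "log_diag ?p $ (j, i) - log_diag ?q $ (j, i) \<le> dist (log_diag ?p) (log_diag ?q)"
    using dist_vec_nth_le[of "log_diag ?p" "(j, i)" "log_diag ?q"] by (simp add: dist_real_def)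
  also have "\<dots> \<le> modulus_of_continuity log_diag S (c ^ length w * diameter S + \<delta> / (1 - c))"
    using assms by (intro dist_le_modulus_of_continuity bounded_log_diag word_comp_in_S dist_word_comp_le)
  finally show ?case using Cons by (simp add: log_diag_nth)
qed simp

lemma orbit_log_diag_diff_bound:
  assumes "norm s < r0" "norm t < r0" "norm (s - t) \<le> \<delta>" "y \<in> S" "z \<in> S"
    and K: "c ^ K * diameter S \<le> \<delta> / (1 - c)"
  shows "orbit_log_diag f s w y j - orbit_log_diag f t w z j
           \<le> real K * diameter (log_diag ` S)
             + real (length w) * modulus_of_continuity log_diag S (2 * \<delta> / (1 - c))"
proof -
  let ?m = "modulus_of_continuity log_diag S"
  have "?m (c ^ k * diameter S + \<delta> / (1 - c)) \<le> ?m (2 * \<delta> / (1 - c))" if "K \<le> k" for k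
  proof (rule modulus_of_continuity_mono[OF bounded_log_diag])
    have "c ^ k * diameter S \<le> c ^ K * diameter S"
      using that c_nonneg c_less_1 diameter_ge_0[OF compact_imp_bounded[OF S_compact]]
      by (intro mult_right_mono power_decreasing) auto
    then show "c ^ k * diameter S + \<delta> / (1 - c) \<le> 2 * \<delta> / (1 - c)" using K by simp
  qed
  then have "(\<Sum>k<length w. ?m (c ^ k * diameter S + \<delta> / (1 - c)))
      \<le> real K * diameter (log_diag ` S) + real (length w) * ?m (2 * \<delta> / (1 - c))"
    using modulus_of_continuity_le_diameter[OF bounded_log_diag]
      modulus_of_continuity_nonneg[OF bounded_log_diag] diameter_ge_0[OF bounded_log_diag]
    by (intro sum_lessThan_le_with_excess) (auto intro: add_increasing)
  then show ?thesis by (rule order_trans[OF orbit_log_diag_diff_le[OF assms(1-5)]])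
qed

lemma modulus_log_diag_tendsto_0:
  "((\<lambda>\<delta>. modulus_of_continuity log_diag S (2 * \<delta> / (1 - c))) \<longlongrightarrow> 0) (at_right 0)"
proof -
  have "isCont (modulus_of_continuity log_diag S) 0"
    using compact_uniformly_continuous[OF continuous_on_log_diag S_compact]
    by (rule isCont_modulus_of_continuity[OF bounded_log_diag])
  moreover have "((\<lambda>\<delta>. 2 * \<delta> / (1 - c)) \<longlongrightarrow> 0) (at_right 0)"
    using c_less_1 by (intro tendsto_eq_intros) auto
  ultimately show ?thesis
    using isCont_tendsto_compose modulus_of_continuity_0[OF bounded_log_diag] by fastforce
qed

lemma mat_opnorm_jacobian_ratio_le:
  assumes \<beta>: "\<beta> \<ge> 1"
    and off: "\<And>i p a k b. p \<in> S \<Longrightarrow> real CARD('d) * \<bar>Dmat (f i) p $ a $ k\<bar> \<le> \<beta> * \<bar>Dmat (f i) p $ b $ b\<bar>"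
    and K: "c ^ K * diameter S \<le> \<delta> / (1 - c)"
    and s: "norm s < r0" and t: "norm t < r0" and st: "norm (s - t) \<le> \<delta>"
    and y: "y \<in> S" and z: "\<And>k. z k \<in> S"
  shows "mat_opnorm (Dmat (word_comp (transl f s) \<omega>) y ** matrix_inv (Dstar (word_comp (transl f t) \<omega>) z))
           \<le> (2 * real CARD('d) * (\<beta> * (real (length \<omega>) + 1)) ^ CARD('d)
               * exp (real K * diameter (log_diag ` S)
                      + real (length \<omega>) * modulus_of_continuity log_diag S (2 * \<delta> / (1 - c))))
             ^ (CARD('d) + 2)"
proof -
  define G where "G = \<beta> * (real (length \<omega>) + 1)"
  define R where "R = exp (real K * diameter (log_diag ` S)
                      + real (length \<omega>) * modulus_of_continuity log_diag S (2 * \<delta> / (1 - c)))"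
  define H where "H = G ^ CARD('d) * R"
  define M where "M = orbit_jacobian f s \<omega> y"
  define N where "N = (\<chi> a b. orbit_jacobian f t \<omega> (z a) $ a $ b)"
  have G: "G \<ge> 1" using mult_mono[of 1 \<beta> 1 "real (length \<omega>) + 1"] \<beta> by (simp add: G_def)
  have "R \<ge> 1"
    using diameter_ge_0[OF bounded_log_diag] modulus_of_continuity_nonneg[OF bounded_log_diag]
    by (simp add: R_def)
  then have H: "H \<ge> 1" using mult_mono[of 1 "G ^ CARD('d)" 1 R] G by (simp add: H_def one_le_power)
  have ratio: "exp (orbit_log_diag f s' \<omega> y' j) \<le> R * exp (orbit_log_diag f t' \<omega> z' j)"
    if "norm s' < r0" "norm t' < r0" "norm (s' - t') \<le> \<delta>" "y' \<in> S" "z' \<in> S" for s' t' y' z' j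
    using orbit_log_diag_diff_bound[OF that K, of \<omega> j] by (simp add: R_def flip: exp_add)
  have G_pow: "G ^ rank_below a \<le> G ^ CARD('d)" for a :: 'd
    using G rank_below_le_card[of a] by (rule power_increasing[rotated])
  have entry: "\<bar>orbit_jacobian f s' \<omega> y' $ a $ b\<bar> \<le> G ^ CARD('d) * exp (orbit_log_diag f s' \<omega> y' b)"
    if "norm s' < r0" "y' \<in> S" for s' y' a b
    using orbit_jacobian_entry_bound[OF \<beta> off that, of \<omega> a b] G_pow[of a]
    by (simp add: G_def order_trans mult_right_mono)
  have N: "lower_triangular N" and N_diag: "\<bar>N $ k $ k\<bar> = exp (orbit_log_diag f t \<omega> (z k) k)" for k
    using lower_triangular_orbit_jacobian[OF t z] abs_orbit_jacobian_diag[OF t z]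
    by (auto simp: N_def lower_triangular_def)
  have "\<delta> \<ge> 0" using st norm_ge_zero order_trans by blast
  have HN: "\<bar>N $ j $ k\<bar> \<le> H * \<bar>N $ k $ k\<bar>" for j k
  proof -
    have "\<bar>N $ j $ k\<bar> \<le> G ^ CARD('d) * exp (orbit_log_diag f t \<omega> (z j) k)"
      using entry[OF t z[of j]] by (simp add: N_def)
    also have "\<dots> \<le> G ^ CARD('d) * (R * exp (orbit_log_diag f t \<omega> (z k) k))"
      using ratio[OF t t _ z[of j] z[of k], of k] G \<open>\<delta> \<ge> 0\<close> by (intro mult_left_mono) auto
    finally show ?thesis by (simp add: H_def N_diag mult.assoc)
  qed
  have HM: "\<bar>M $ i $ j\<bar> \<le> H * \<bar>N $ j $ j\<bar>" for i j
  proof -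
    have "\<bar>M $ i $ j\<bar> \<le> G ^ CARD('d) * exp (orbit_log_diag f s \<omega> y j)"
      using entry[OF s y] by (simp add: M_def)
    also have "\<dots> \<le> G ^ CARD('d) * (R * exp (orbit_log_diag f t \<omega> (z j) j))"
      using ratio[OF s t st y z[of j], of j] G by (intro mult_left_mono) auto
    finally show ?thesis by (simp add: H_def N_diag mult.assoc)
  qed
  have "invertible N" by (intro lower_triangular_invertible N) (metis N_diag abs_zero exp_not_eq_zero)
  then have "mat_opnorm (M ** matrix_inv N) \<le> (2 * real CARD('d) * H) ^ (CARD('d) + 2)"
    by (intro mat_opnorm_mult_matrix_inv_le lower_triangular_domination_bound[OF N HN HM H])
  moreover have "Dmat (word_comp (transl f s) \<omega>) y = M" "Dstar (word_comp (transl f t) \<omega>) z = N"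
    using Dmat_word_comp[OF s y] Dmat_word_comp[OF t z] by (simp_all add: M_def N_def Dstar_def)
  ultimately show ?thesis by (simp add: H_def G_def R_def mult.assoc)
qed

lemma mat_opnorm_jacobian_ratio_exp_bound:
  assumes "\<delta> > 0"
  obtains C where "C \<ge> 1"
    and "\<And>\<omega> y z s t. y \<in> S \<Longrightarrow> (\<And>k. z k \<in> S) \<Longrightarrow> norm s < r0 \<Longrightarrow> norm t < r0 \<Longrightarrow> norm (s - t) \<le> \<delta> \<Longrightarrow>
          mat_opnorm (Dmat (word_comp (transl f s) \<omega>) y ** matrix_inv (Dstar (word_comp (transl f t) \<omega>) z))
            \<le> C * exp (real (length \<omega>)
                       * (real (CARD('d) + 2) * modulus_of_continuity log_diag S (2 * \<delta> / (1 - c)) + \<delta>))"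
proof -
  obtain \<beta> where \<beta>: "\<beta> \<ge> 1"
    and off: "\<And>i p a k b. p \<in> S \<Longrightarrow> real CARD('d) * \<bar>Dmat (f i) p $ a $ k\<bar> \<le> \<beta> * \<bar>Dmat (f i) p $ b $ b\<bar>"
    using Dmat_f_offdiag_dominated by blast
  define D where "D = diameter S"
  have D: "D \<ge> 0" unfolding D_def by (rule diameter_ge_0[OF compact_imp_bounded[OF S_compact]])
  have "\<delta> / (1 - c) / (D + 1) > 0" using assms c_less_1 D by simp
  then obtain K where "c ^ K < \<delta> / (1 - c) / (D + 1)"
    using real_arch_pow_inv c_nonneg c_less_1 by (metis le_less zero_less_power)
  then have "c ^ K * (D + 1) < \<delta> / (1 - c)" using D by (subst (asm) pos_less_divide_eq) auto
  moreover have "c ^ K * D \<le> c ^ K * (D + 1)" using c_nonneg by (intro mult_left_mono) auto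
  ultimately have K: "c ^ K * D \<le> \<delta> / (1 - c)" by linarith
  define d where "d = CARD('d)"
  define m where "m = modulus_of_continuity log_diag S (2 * \<delta> / (1 - c))"
  define C0 where "C0 = 2 * real d * \<beta> ^ d * exp (real K * diameter (log_diag ` S))"
  define C where "C = max 1 (C0 ^ (d + 2) * (real (d * (d + 2)) / \<delta> + 1) ^ (d * (d + 2)) * exp \<delta>)"
  have "mat_opnorm (Dmat (word_comp (transl f s) \<omega>) y ** matrix_inv (Dstar (word_comp (transl f t) \<omega>) z))
          \<le> C * exp (real (length \<omega>) * (real (d + 2) * m + \<delta>))"
    if "y \<in> S" "\<And>k. z k \<in> S" "norm s < r0" "norm t < r0" "norm (s - t) \<le> \<delta>" for \<omega> y z s t
  proof -
    let ?n = "real (length \<omega>)"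
    have "mat_opnorm (Dmat (word_comp (transl f s) \<omega>) y ** matrix_inv (Dstar (word_comp (transl f t) \<omega>) z))
            \<le> (2 * real d * (\<beta> * (?n + 1)) ^ d * exp (real K * diameter (log_diag ` S) + ?n * m)) ^ (d + 2)"
      unfolding d_def m_def
      by (intro mat_opnorm_jacobian_ratio_le[OF \<beta> off K[unfolded D_def] that(3,4,5,1)] that(2))
    also have "\<dots> = (C0 * (?n + 1) ^ d * exp (?n * m)) ^ (d + 2)"
      by (simp add: C0_def power_mult_distrib exp_add mult_ac)
    also have "\<dots> \<le> C0 ^ (d + 2) * (real (d * (d + 2)) / \<delta> + 1) ^ (d * (d + 2)) * exp \<delta>
                        * exp (?n * (real (d + 2) * m + \<delta>))"
      using assms \<beta> by (intro power_poly_exp_le) (auto simp: C0_def)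
    also have "\<dots> \<le> C * exp (?n * (real (d + 2) * m + \<delta>))"
      by (intro mult_right_mono) (auto simp: C_def)
    finally show ?thesis .
  qed
  then show ?thesis by (intro that[of C]) (auto simp: C_def d_def m_def)
qed

end

end

theorem proposition4p2:
  fixes S U :: "(real^('d::{finite,linorder})) set"
    and f :: "'l::finite \<Rightarrow> real^('d::{finite,linorder}) \<Rightarrow> real^('d::{finite,linorder})"
    and r0 :: real
  assumes ell: "CARD('l) \<ge> 2"
    and S_compact: "compact S" and S_int: "interior S \<noteq> {}"
    and maps_in: "\<forall>i. f i ` S \<subseteq> interior S"
    and U_bounded: "bounded U" and U_open: "open U" and U_conn: "connected U"
    and S_U: "S \<subseteq> U"
    and diffeo: "\<forall>i. contracting_C1_diffeo U (f i) \<and> closure (f i ` U) \<subseteq> U"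
    and dom: "\<forall>i. \<forall>z\<in>S. dominated_lower_triangular (Dmat (f i) z)"
    and r0_pos: "r0 > 0"
    and r0_trans: "\<forall>t::real^('d::{finite,linorder})^'l. norm t < r0 \<longrightarrow> (\<forall>i. transl f t i ` S \<subseteq> interior S)"
  shows "\<exists>h::real \<Rightarrow> real.
           (\<forall>\<delta>\<in>{0<..<r0}. h \<delta> > 0) \<and> (h \<longlongrightarrow> 0) (at_right 0) \<and>
           (\<forall>\<delta>\<in>{0<..<r0}. \<exists>C\<ge>1.
              \<forall>n::nat. \<forall>\<omega>::'l list. length \<omega> = n \<longrightarrow>
              (\<forall>y\<in>S. \<forall>z::'d::{finite,linorder} \<Rightarrow> real^('d::{finite,linorder}). (\<forall>k. z k \<in> S) \<longrightarrow>
               (\<forall>s t::real^('d::{finite,linorder})^'l. norm s < r0 \<longrightarrow> norm t < r0 \<longrightarrow> norm (s - t) < \<delta> \<longrightarrow>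
                 mat_opnorm (Dmat (word_comp (transl f s) \<omega>) y **
                             matrix_inv (Dstar (word_comp (transl f t) \<omega>) z))
                   \<le> C * exp (real n * h \<delta>))))"
proof -
  interpret dominated_translational_ifs S U f r0
    using S_compact U_open S_U diffeo dom r0_trans by unfold_locales blast+
  obtain c where c: "0 \<le> c" "c < 1" "\<And>i x y. x \<in> U \<Longrightarrow> y \<in> U \<Longrightarrow> dist (f i x) (f i y) \<le> c * dist x y"
    using common_contraction_factor by blast
  define m where "m = modulus_of_continuity log_diag S"
  define h where "h \<delta> = real (CARD('d) + 2) * m (2 * \<delta> / (1 - c)) + \<delta>" for \<delta>
  have "h \<delta> > 0" if "\<delta> > 0" for \<delta>
    using that modulus_of_continuity_nonneg[OF bounded_log_diag] by (simp add: h_def m_def add_nonneg_pos)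
  moreover have "(h \<longlongrightarrow> 0) (at_right 0)"
    using modulus_log_diag_tendsto_0[OF c] unfolding h_def m_def by (intro tendsto_eq_intros) auto
  moreover have "\<exists>C\<ge>1. \<forall>n \<omega>. length \<omega> = n \<longrightarrow> (\<forall>y\<in>S. \<forall>z. (\<forall>k. z k \<in> S) \<longrightarrow>
       (\<forall>s t. norm s < r0 \<longrightarrow> norm t < r0 \<longrightarrow> norm (s - t) < \<delta> \<longrightarrow>
         mat_opnorm (Dmat (word_comp (transl f s) \<omega>) y ** matrix_inv (Dstar (word_comp (transl f t) \<omega>) z))
           \<le> C * exp (real n * h \<delta>)))" if \<delta>: "\<delta> > 0" for \<delta>
  proof -
    obtain C where "C \<ge> 1" and C: "\<And>\<omega> y z s t. y \<in> S \<Longrightarrow> (\<And>k. z k \<in> S) \<Longrightarrow> norm s < r0 \<Longrightarrow> norm t < r0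
        \<Longrightarrow> norm (s - t) \<le> \<delta>
        \<Longrightarrow> mat_opnorm (Dmat (word_comp (transl f s) \<omega>) y ** matrix_inv (Dstar (word_comp (transl f t) \<omega>) z))
              \<le> C * exp (real (length \<omega>) * h \<delta>)"
      using mat_opnorm_jacobian_ratio_exp_bound[OF c \<delta>] unfolding h_def m_def by blast
    then show ?thesis by (intro exI[of _ C]) (auto simp: less_imp_le)
  qed
  ultimately show ?thesis by (intro exI[of _ h]) auto
qed

end
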